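(* (1) If $\mathbf n_1=(n_{1,0},\dots,n_{1,N})$ and $\mathbf n_2=(n_{2,0},\dots,n_{2,N})$ satisfy $\tilde n_{1,i}\ge\tilde n_{2,i}$ for all $i=0,\dots,N$ (tildes denoting nondecreasing rearrangements), then $d_{\mathbf n_1}(r)\ge d_{\mathbf n_2}(r)$ for all $r\ge0$. (2) If $\mathbf n_1=(n_{1,0},\dots,n_{1,N_1})$ and $\mathbf n_2=(n_{2,0},\dots,n_{2,N_2})$ are such that the multiset $\{n_{2,0},\dots,n_{2,N_2}\}$ is contained in the multiset $\{n_{1,0},\dots,n_{1,N_1}\}$, then $d_{\mathbf n_1}(r)\le d_{\mathbf n_2}(r)$ for all $r\ge0$.
   Context: For a vector $\mathbf n=(n_0,\dots,n_N)$ of positive integers ($N\ge1$), let $\tilde n_0\le\cdots\le\tilde n_N$ be its nondecreasing rearrangement, $n_{\min}=\tilde n_0$, $c_i=1-i+\min_{k'=1,\dots,N}\lfloor(\sum_{l=0}^{k'}\tilde n_l-i)/k'\rfloor$ for $i=1,\dots,n_{\min}$, and $d_{\mathbf n}(k)=\sum_{i=k+1}^{n_{\min}}c_i$ for integers $0\le k\le n_{\min}$; $d_{\mathbf n}(r)$ for real $r\in[0,n_{\min}]$ is the piecewise-linear interpolation of these points, and $d_{\mathbf n}(r)=0$ for $r>n_{\min}$. This is the diversity-multiplexing tradeoff of the $(n_0,\dots,n_N)$ Rayleigh product channel $\mathbf y=\sqrt{\mathsf{SNR}/(n_1\cdots n_N)}\mathbf H_1\cdots\mathbf H_N\mathbf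 x+\mathbf z$ with independent i.i.d. $\mathcal{CN}(0,1)$ matrices $\mathbf H_i\in\mathbb C^{n_{i-1}\times n_i}$. *)

theory Defs
  imports Complex_Main "HOL-Library.Multiset"
begin

text \<open>A channel configuration n = (n_0,...,n_N) is a list of positive naturals of length N+1, N \<ge> 1.
  The nondecreasing rearrangement is sort ns; its l-th entry (0-based) is ntilde_l.\<close>

definition valid_cfg :: "nat list \<Rightarrow> bool" where
  "valid_cfg ns \<longleftrightarrow> length ns \<ge> 2 \<and> (\<forall>x\<in>set ns. x > 0)"

definition n_min :: "nat list \<Rightarrow> nat" where
  "n_min ns = hd (sort ns)"

definition c_coef :: "nat list \<Rightarrow> nat \<Rightarrow> int" where
  "c_coef ns i = 1 - int i +
     Min ((\<lambda>k. \<lfloor>(real (\<Sum>l=0..k. sort ns ! l) - real i) / real k\<rfloor>) ` {1..length ns - 1})"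

definition d_int :: "nat list \<Rightarrow> nat \<Rightarrow> int" where
  "d_int ns k = (\<Sum>i=k+1..n_min ns. c_coef ns i)"

definition dmt :: "nat list \<Rightarrow> real \<Rightarrow> real" where
  "dmt ns r = (if r > real (n_min ns) then 0 else
     (let k = nat \<lfloor>r\<rfloor> in
       real_of_int (d_int ns k) + (r - real k) * real_of_int (d_int ns (k+1) - d_int ns k)))"

end

theory Submission
  imports Defs
begin

(* Both parts of the corollary are instances of one comparison principle:
   if a is at least as long as b and the sorted entries of a are pointwise
   at most those of b (on the first length b positions), then d_a \<le> d_b.
   Part (1) applies it with the roles of n1, n2 swapped; part (2) reduces to
   it because a sub-multiset has pointwise larger order statistics.

   The principle is proved bottom-up: every coefficient c_i with i \<le> n_min
   is at least 1 (so the partial sums d(k) are nonnegative and grow when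
   the summation range is extended); the minimum defining c_i is monotone in
   the sorted entries and can only decrease when more indices k' are
   available; hence d_a(k) \<le> d_b(k) at every integer point, and the
   comparison passes to the piecewise-linear interpolation, which on
   [0, n_min] is a convex combination of two neighbouring values d(k), d(k+1). *)

lemma n_min_conv_nth: "ns \<noteq> [] \<Longrightarrow> n_min ns = sort ns ! 0"
  by (simp add: n_min_def hd_conv_nth flip: length_greater_0_conv)

text \<open>The smallest order statistic bounds all others; this makes each quotient
  in the definition of c_i large when i \<le> n_min, giving c_i \<ge> 1.\<close>
lemma c_coef_ge_1:
  assumes v: "valid_cfg ns" and i: "i \<le> n_min ns"
  shows "c_coef ns i \<ge> 1"
proof -
  let ?s = "sort ns"
  let ?q = "\<lambda>k. \<lfloor>(real (\<Sum>l=0..k. ?s ! l) - real i) / real k\<rfloor>"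
  have len: "length ns \<ge> 2" using v by (simp add: valid_cfg_def)
  have q_ge: "?q k \<ge> int i" if k: "k \<in> {1..length ns - 1}" for k
  proof -
    have "i \<le> ?s ! l" if "l \<le> k" for l
    proof -
      have "?s ! 0 \<le> ?s ! l" using k that len by (intro sorted_nth_mono) auto
      moreover have "n_min ns = ?s ! 0" using len by (intro n_min_conv_nth) auto
      ultimately show ?thesis using i by linarith
    qed
    hence "(k + 1) * i \<le> (\<Sum>l=0..k. ?s ! l)"
      using sum_mono[of "{0..k}" "\<lambda>_. i" "\<lambda>l. ?s ! l"] by simp
    hence "real (k + 1) * real i \<le> real (\<Sum>l=0..k. ?s ! l)"
      by (simp only: of_nat_mult [symmetric] of_nat_le_iff)
    hence "real i \<le> (real (\<Sum>l=0..k. ?s ! l) - real i) / real k"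
      using k by (simp add: field_simps del: of_nat_sum)
    thus ?thesis by (metis floor_mono floor_of_nat)
  qed
  have "Min (?q ` {1..length ns - 1}) \<ge> int i"
    using len q_ge by (subst Min_ge_iff) auto
  thus ?thesis unfolding c_coef_def by simp
qed

lemma d_int_nonneg: "valid_cfg ns \<Longrightarrow> d_int ns k \<ge> 0"
  unfolding d_int_def using c_coef_ge_1 by (intro sum_nonneg) fastforce

text \<open>Monotonicity of c_i: smaller sorted prefix sums lower every quotient, and
  a longer configuration minimises over a superset of indices k'.\<close>
lemma c_coef_mono:
  assumes la: "length a \<ge> length b" and lb: "length b \<ge> 2"
    and le: "\<forall>l<length b. sort a ! l \<le> sort b ! l"
  shows "c_coef a i \<le> c_coef b i"
proof -
  let ?q = "\<lambda>ns k. \<lfloor>(real (\<Sum>l=0..k. sort ns ! l) - real i) / real k\<rfloor>"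
  have "Min (?q b ` {1..length b - 1}) \<in> ?q b ` {1..length b - 1}"
    using lb by (intro Min_in) auto
  then obtain k where k: "k \<in> {1..length b - 1}"
    and k_min: "Min (?q b ` {1..length b - 1}) = ?q b k" by auto
  have "(\<Sum>l=0..k. sort a ! l) \<le> (\<Sum>l=0..k. sort b ! l)"
    using le k lb by (intro sum_mono) auto
  hence "?q a k \<le> ?q b k"
    unfolding of_nat_le_iff[symmetric, where 'a=real]
    by (intro floor_mono divide_right_mono diff_right_mono) auto
  moreover have "Min (?q a ` {1..length a - 1}) \<le> ?q a k"
    using k la by (intro Min_le) auto
  ultimately show ?thesis unfolding c_coef_def using k_min by simp
qed

text \<open>Comparison at the integer points: the summands compare, and b's sum
  runs over more terms, all of which are positive.\<close>
lemma d_int_mono: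
  assumes vb: "valid_cfg b" and m: "n_min a \<le> n_min b"
    and c: "\<And>i. c_coef a i \<le> c_coef b i"
  shows "d_int a j \<le> d_int b j"
proof -
  have "d_int a j \<le> (\<Sum>i=j+1..n_min a. c_coef b i)"
    unfolding d_int_def using c by (intro sum_mono)
  also have "\<dots> \<le> (\<Sum>i=j+1..n_min b. c_coef b i)"
    using m c_coef_ge_1[OF vb] by (intro sum_mono2) fastforce+
  finally show ?thesis unfolding d_int_def .
qed

lemma dmt_convex_combination:
  assumes "0 \<le> r" "r \<le> real (n_min ns)"
  defines "k \<equiv> nat \<lfloor>r\<rfloor>" and "t \<equiv> r - real (nat \<lfloor>r\<rfloor>)"
  shows "0 \<le> t" "t \<le> 1"
    and "dmt ns r = (1 - t) * d_int ns k + t * d_int ns (k + 1)"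
  using assms unfolding dmt_def Let_def by (auto simp: algebra_simps) linarith+

lemma dmt_nonneg:
  assumes v: "valid_cfg ns" and r: "r \<ge> 0"
  shows "dmt ns r \<ge> 0"
proof (cases "r > real (n_min ns)")
  case True thus ?thesis by (simp add: dmt_def)
next
  case False
  then show ?thesis using dmt_convex_combination[OF r, of ns] d_int_nonneg[OF v]
    by (simp add: add_nonneg_nonneg)
qed

lemma dmt_mono:
  assumes vb: "valid_cfg b" and m: "n_min a \<le> n_min b"
    and c: "\<And>i. c_coef a i \<le> c_coef b i" and r: "r \<ge> 0"
  shows "dmt a r \<le> dmt b r"
proof (cases "r > real (n_min a)")
  case True
  thus ?thesis using dmt_nonneg[OF vb r] by (simp add: dmt_def)
next
  case False
  hence rb: "r \<le> real (n_min b)" using m by linarith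
  note ca = dmt_convex_combination[OF r, of a] and cb = dmt_convex_combination[OF r rb]
  have d: "d_int a j \<le> d_int b j" for j using d_int_mono[OF vb m c] .
  show ?thesis using False ca cb d
    by (simp add: add_mono mult_left_mono)
qed

lemma dmt_mono_sorted_prefix:
  assumes vb: "valid_cfg b" and la: "length a \<ge> length b"
    and le: "\<forall>l<length b. sort a ! l \<le> sort b ! l" and r: "r \<ge> 0"
  shows "dmt a r \<le> dmt b r"
proof (rule dmt_mono[OF vb _ _ r])
  have lb: "length b \<ge> 2" using vb by (simp add: valid_cfg_def)
  show "n_min a \<le> n_min b"
    using le lb la by (simp add: n_min_conv_nth flip: length_greater_0_conv)
  show "c_coef a i \<le> c_coef b i" for i using c_coef_mono[OF la lb le] .
qed

text \<open>Enlarging a multiset can only lower its order statistics: if the l-th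
  smallest entry of a exceeded that of b, then a would contain at most l
  entries \<le> sort b ! l, while its sub-multiset b already contains l + 1.\<close>
lemma sort_nth_sub_mset:
  fixes a b :: "'a::linorder list"
  assumes sub: "mset b \<subseteq># mset a" and l: "l < length b"
  shows "sort a ! l \<le> sort b ! l"
proof (rule ccontr)
  assume "\<not> ?thesis"
  hence gt: "sort b ! l < sort a ! l" by simp
  let ?P = "\<lambda>y. y \<le> sort b ! l"
  have "size (filter_mset ?P (mset b)) \<le> size (filter_mset ?P (mset a))"
    using sub by (intro size_mset_mono multiset_filter_mono)
  hence count: "length (filter ?P (sort b)) \<le> length (filter ?P (sort a))"
    by (metis mset_filter mset_sort size_mset)
  have "\<forall>y\<in>set (take (Suc l) (sort b)). ?P y"
  proof
    fix y assume "y \<in> set (take (Suc l) (sort b))"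
    then obtain j where "j < Suc l" "j < length b" "y = sort b ! j"
      by (auto simp: in_set_conv_nth)
    thus "?P y" using l by (simp add: sorted_nth_mono)
  qed
  hence "length (filter ?P (sort b))
           = Suc l + length (filter ?P (drop (Suc l) (sort b)))"
    using l by (subst append_take_drop_id[symmetric, of _ "Suc l"], subst filter_append) simp
  hence many: "Suc l \<le> length (filter ?P (sort b))" by simp
  have "\<forall>y\<in>set (drop l (sort a)). \<not> ?P y"
  proof
    fix y assume "y \<in> set (drop l (sort a))"
    then obtain j where j: "j < length a - l" "y = sort a ! (l + j)"
      by (auto simp: in_set_conv_nth)
    have "sort a ! l \<le> sort a ! (l + j)" using j by (intro sorted_nth_mono) auto
    thus "\<not> ?P y" using gt j by simp
  qed
  hence "length (filter ?P (sort a)) = length (filter ?P (take l (sort a)))"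
    by (subst append_take_drop_id[symmetric, of _ l], subst filter_append) simp
  also have "\<dots> \<le> l"
    using length_filter_le[of ?P "take l (sort a)"] by simp
  finally have few: "length (filter ?P (sort a)) \<le> l" .
  show False using count many few by simp
qed

theorem corollary1:
  shows "(\<forall>n1 n2 r. valid_cfg n1 \<and> valid_cfg n2 \<and> length n1 = length n2 \<and>
            (\<forall>i<length n1. sort n1 ! i \<ge> sort n2 ! i) \<and> r \<ge> 0
            \<longrightarrow> dmt n1 r \<ge> dmt n2 r)
       \<and> (\<forall>n1 n2 r. valid_cfg n1 \<and> valid_cfg n2 \<and> mset n2 \<subseteq># mset n1 \<and> r \<ge> 0
            \<longrightarrow> dmt n1 r \<le> dmt n2 r)"
proof (intro conjI allI impI)
  fix n1 n2 :: "nat list" and r :: real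
  assume "valid_cfg n1 \<and> valid_cfg n2 \<and> length n1 = length n2 \<and>
            (\<forall>i<length n1. sort n1 ! i \<ge> sort n2 ! i) \<and> r \<ge> 0"
  then show "dmt n1 r \<ge> dmt n2 r"
    by (intro dmt_mono_sorted_prefix) auto
next
  fix n1 n2 :: "nat list" and r :: real
  assume h: "valid_cfg n1 \<and> valid_cfg n2 \<and> mset n2 \<subseteq># mset n1 \<and> r \<ge> 0"
  have "length n2 \<le> length n1" using h by (metis size_mset size_mset_mono)
  then show "dmt n1 r \<le> dmt n2 r"
    using h sort_nth_sub_mset by (intro dmt_mono_sorted_prefix) auto
qed

end
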